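(* Let $r\ge5$. There is a constant $C$ depending only on $r$ such that for every $K_r$-tree $T$ and every $S\subseteq V(T)$, and for any run of the $(r-2)_*$-BP process on $T$ with seed set $S$, we have $|\langle S;T\rangle_*|\le C|S|$.
   Context: A graph $T$ is a $K_r$-tree if it is the union of copies $H_1,\dots,H_\vartheta$ of $K_r$ such that for each $1<i\le\vartheta$, $H_i$ shares exactly one edge with $H_1\cup\cdots\cup H_{i-1}$ (the common vertices being exactly the two endpoints of that edge). An edge of $T$ is internal if it lies in at least two of the $H_i$. The $(r-2)_*$-bootstrap percolation process on $T$ with seed set $S\subseteq V(T)$: initially the vertices of $S$ are infected; in each step, either (usual step) some uninfected vertex with at least $r-2$ infected neighbors in $T$ becomes infected; or else (special step), if no usual step is possible but for some internal edge $f$ there are two copies $H_i\ne H_j$ containing $f$ such that $H_i$ has $r-4$ infected vertices and $H_j$ has $1$ infected vertex, all these $r-3$ vertices not in $f$, then an arbitrarily chosen vertex $u\in f$ becomes infected; otherwise the process terminates. $\langle S;T\rangle_*$ is the set of eventually infected vertices. *)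

theory Defs
  imports Complex_Main
begin

text \<open>A K_r-tree is given by its list of copies H_1,...,H_theta of K_r, each copy
  represented by its vertex set (a clique on r vertices). Vertices are natural numbers
  (every finite graph is isomorphic to one on nat), so that the constant C can be
  quantified independently of any type.\<close>

definition Kr_tree :: "nat \<Rightarrow> nat set list \<Rightarrow> bool" where
  "Kr_tree r Hs \<longleftrightarrow> Hs \<noteq> [] \<and>
     (\<forall>H\<in>set Hs. finite H \<and> card H = r) \<and>
     (\<forall>i. 0 < i \<and> i < length Hs \<longrightarrow>
        (\<exists>u v. u \<noteq> v \<and> Hs ! i \<inter> (\<Union>j<i. Hs ! j) = {u, v} \<and>
               (\<exists>j<i. {u, v} \<subseteq> Hs ! j)))"

definition tverts :: "nat set list \<Rightarrow> nat set" where
  "tverts Hs = \<Union>(set Hs)"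

definition tadj :: "nat set list \<Rightarrow> nat \<Rightarrow> nat \<Rightarrow> bool" where
  "tadj Hs v w \<longleftrightarrow> v \<noteq> w \<and> (\<exists>H\<in>set Hs. v \<in> H \<and> w \<in> H)"

definition internal_edge :: "nat set list \<Rightarrow> nat set \<Rightarrow> bool" where
  "internal_edge Hs f \<longleftrightarrow> (\<exists>u v. u \<noteq> v \<and> f = {u, v}) \<and>
     (\<exists>i j. i < length Hs \<and> j < length Hs \<and> i \<noteq> j \<and> f \<subseteq> Hs ! i \<and> f \<subseteq> Hs ! j)"

definition usual_step :: "nat \<Rightarrow> nat set list \<Rightarrow> nat set \<Rightarrow> nat set \<Rightarrow> bool" where
  "usual_step r Hs I I' \<longleftrightarrow>
     (\<exists>v\<in>tverts Hs. v \<notin> I \<and> card {w. tadj Hs v w \<and> w \<in> I} \<ge> r - 2 \<and> I' = insert v I)"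

definition special_step :: "nat \<Rightarrow> nat set list \<Rightarrow> nat set \<Rightarrow> nat set \<Rightarrow> bool" where
  "special_step r Hs I I' \<longleftrightarrow>
     \<not> (\<exists>J. usual_step r Hs I J) \<and>
     (\<exists>f i j u. internal_edge Hs f \<and> i < length Hs \<and> j < length Hs \<and> i \<noteq> j \<and>
        f \<subseteq> Hs ! i \<and> f \<subseteq> Hs ! j \<and>
        card (Hs ! i \<inter> I) = r - 4 \<and> card (Hs ! j \<inter> I) = 1 \<and>
        (Hs ! i \<inter> I) \<inter> f = {} \<and> (Hs ! j \<inter> I) \<inter> f = {} \<and>
        u \<in> f \<and> I' = insert u I)"

definition bp_step :: "nat \<Rightarrow> nat set list \<Rightarrow> nat set \<Rightarrow> nat set \<Rightarrow> bool" where
  "bp_step r Hs I I' \<longleftrightarrow> usual_step r Hs I I' \<or> special_step r Hs I I'"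

definition bp_run_result :: "nat \<Rightarrow> nat set list \<Rightarrow> nat set \<Rightarrow> nat set \<Rightarrow> bool" where
  "bp_run_result r Hs S I \<longleftrightarrow> (bp_step r Hs)\<^sup>*\<^sup>* S I \<and> \<not> (\<exists>I'. bp_step r Hs I I')"

end

theory Submission
  imports Defs
begin

text \<open>A potential argument. For an infected set I let
  Phi(I) = 2 ((r - 2) |I| - e(I) + f(I)), where e(I) counts the edges of T inside I and f(I)
  the copies of K_r inside I. A usual step infecting v with d >= r - 2 infected neighbours and
  completing k copies changes Phi by 2 (r - 2 - d + k) <= 0, since completing one copy forces
  d >= r - 1 and completing k >= 2 copies forces d >= k (r - 2). A special step raises Phi by
  at most 2; it is paid for by charging the two copies H_i and H_j, which afterwards stay
  nearly full around the other endpoint of the internal edge (now infectable), so that no copy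
  is charged twice in the same role. Thus Phi(I) <= Phi(S) + (number of charges), and
  Phi(S) <= 2 (r - 1) |S|. Finally Phi splits into a sum over the copies of terms depending
  only on the infected vertices of each copy; when the process stops, each copy contributes
  at least its charges plus 1/r times the number of its fresh infected vertices, whence
  |I| <= r Phi(S) <= 2 r (r - 1) |S|.\<close>

locale Kr_tree_graph =
  fixes r :: nat and Hs :: "nat set list"
  assumes Kr_tree: "Kr_tree r Hs"
begin

abbreviation L :: nat where "L \<equiv> length Hs"

definition shared :: "nat \<Rightarrow> nat set" where
  "shared i = Hs ! i \<inter> (\<Union>j<i. Hs ! j)"

definition fresh :: "nat \<Rightarrow> nat set" where
  "fresh i = Hs ! i - shared i"

lemma finite_clique: "i < L \<Longrightarrow> finite (Hs ! i)"
  using Kr_tree nth_mem unfolding Kr_tree_def by blast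

lemma card_clique: "i < L \<Longrightarrow> card (Hs ! i) = r"
  using Kr_tree nth_mem unfolding Kr_tree_def by blast

lemma shared_subset: "shared i \<subseteq> Hs ! i"
  unfolding shared_def by auto

lemma fresh_subset: "fresh i \<subseteq> Hs ! i"
  unfolding fresh_def by auto

lemma fresh_shared_disjoint: "fresh i \<inter> shared i = {}"
  unfolding fresh_def by auto

lemma fresh_Un_shared: "fresh i \<union> shared i = Hs ! i"
  using shared_subset by (auto simp: fresh_def)

lemma shared_pos:
  assumes "0 < i" "i < L"
  obtains u v j where "u \<noteq> v" "shared i = {u, v}" "j < i" "{u, v} \<subseteq> Hs ! j"
  using Kr_tree assms unfolding Kr_tree_def shared_def by blast

lemma card_shared: "i < L \<Longrightarrow> card (shared i) = (if i = 0 then 0 else 2)"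
proof (cases "i = 0")
  case False
  then have "0 < i" by simp
  moreover assume "i < L"
  ultimately obtain u v j where "u \<noteq> v" "shared i = {u, v}" "j < i" "{u, v} \<subseteq> Hs ! j"
    by (rule shared_pos)
  then show ?thesis using False by simp
qed (simp add: shared_def)

lemma finite_shared: "i < L \<Longrightarrow> finite (shared i)"
  using finite_clique shared_subset finite_subset by blast

lemma finite_fresh: "i < L \<Longrightarrow> finite (fresh i)"
  using finite_clique fresh_subset finite_subset by blast

lemma card_fresh: "i < L \<Longrightarrow> card (fresh i) = (if i = 0 then r else r - 2)"
  unfolding fresh_def using card_Diff_subset[OF finite_shared shared_subset] card_clique card_shared
  by simp

lemma clique_Int_subset_shared: "i < j \<Longrightarrow> Hs ! i \<inter> Hs ! j \<subseteq> shared j"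
  unfolding shared_def by auto

lemma card_clique_Int:
  assumes "i < L" "j < L" "i \<noteq> j"
  shows "card (Hs ! i \<inter> Hs ! j) \<le> 2"
proof -
  have ordered: "card (Hs ! i \<inter> Hs ! j) \<le> 2" if "i < j" "j < L" for i j
  proof -
    have "card (Hs ! i \<inter> Hs ! j) \<le> card (shared j)"
      using card_mono[OF finite_shared clique_Int_subset_shared] that by blast
    then show ?thesis using card_shared[OF \<open>j < L\<close>] by (simp split: if_splits)
  qed
  then show ?thesis
    using assms ordered[of i j] ordered[of j i] by (metis Int_commute linorder_neqE_nat)
qed

lemma fresh_disjoint:
  assumes "i \<noteq> j"
  shows "fresh i \<inter> fresh j = {}"
proof -
  have ordered: "fresh a \<inter> fresh b = {}" if "a < b" for a b
    using clique_Int_subset_shared[OF that] fresh_subset[of a] fresh_subset[of b]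
      fresh_shared_disjoint[of b] by blast
  then show ?thesis
    using assms ordered[of i j] ordered[of j i] by (metis Int_commute linorder_neqE_nat)
qed

definition birth :: "nat \<Rightarrow> nat" where
  "birth v = (LEAST i. i < L \<and> v \<in> Hs ! i)"

lemma tverts_iff: "v \<in> tverts Hs \<longleftrightarrow> (\<exists>i<L. v \<in> Hs ! i)"
  unfolding tverts_def by (metis Union_iff in_set_conv_nth)

lemma finite_tverts: "finite (tverts Hs)"
  using Kr_tree unfolding tverts_def Kr_tree_def by blast

lemma birth:
  assumes "v \<in> tverts Hs"
  shows "birth v < L" "v \<in> Hs ! birth v" "\<And>j. j < birth v \<Longrightarrow> v \<notin> Hs ! j"
proof -
  obtain i where "i < L \<and> v \<in> Hs ! i"
    using assms tverts_iff by blast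
  then show "birth v < L" "v \<in> Hs ! birth v"
    using LeastI[of "\<lambda>i. i < L \<and> v \<in> Hs ! i"] unfolding birth_def by auto
  fix j
  assume "j < birth v"
  then have "\<not> (j < L \<and> v \<in> Hs ! j)"
    unfolding birth_def by (rule not_less_Least)
  then show "v \<notin> Hs ! j"
    using \<open>j < birth v\<close> \<open>birth v < L\<close> by simp
qed

lemma birth_le: "i < L \<Longrightarrow> v \<in> Hs ! i \<Longrightarrow> birth v \<le> i"
  unfolding birth_def by (rule Least_le) simp

lemma fresh_birth: "v \<in> tverts Hs \<Longrightarrow> v \<in> fresh (birth v)"
  using birth unfolding fresh_def shared_def by auto

lemma shared_if_not_birth:
  assumes "i < L" "v \<in> Hs ! i" "i \<noteq> birth v"
  shows "v \<in> shared i" "birth v < i"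
proof -
  show "birth v < i"
    using birth_le[OF assms(1,2)] assms(3) by simp
  then show "v \<in> shared i"
    using birth(2)[of v] assms tverts_iff unfolding shared_def by auto
qed

lemma fresh_iff_birth: "v \<in> tverts Hs \<Longrightarrow> i < L \<Longrightarrow> v \<in> fresh i \<longleftrightarrow> i = birth v"
  using fresh_birth shared_if_not_birth fresh_subset fresh_shared_disjoint by blast

lemma tverts_eq_UN_fresh: "tverts Hs = (\<Union>i<L. fresh i)"
  using birth(1) fresh_birth fresh_subset tverts_iff by blast

lemma card_eq_sum_fresh:
  assumes "I \<subseteq> tverts Hs"
  shows "card I = (\<Sum>i<L. card (fresh i \<inter> I))"
proof -
  have "I = (\<Union>i<L. fresh i \<inter> I)"
    using assms tverts_eq_UN_fresh by blast
  also have "card \<dots> = (\<Sum>i<L. card (fresh i \<inter> I))"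
    by (rule card_UN_disjoint) (use finite_fresh fresh_disjoint in auto)
  finally show ?thesis .
qed

lemma card_clique_Int_split:
  "i < L \<Longrightarrow> card (Hs ! i \<inter> I) = card (fresh i \<inter> I) + card (shared i \<inter> I)"
  using card_Un_disjoint[of "fresh i \<inter> I" "shared i \<inter> I"] finite_fresh finite_shared
    fresh_Un_shared[of i] fresh_shared_disjoint[of i]
  by (metis Int_Un_distrib2 finite_Int inf_bot_left inf_left_commute inf_sup_aci(1))

definition infected_nbrs :: "nat set \<Rightarrow> nat \<Rightarrow> nat set" where
  "infected_nbrs I v = {w. tadj Hs v w \<and> w \<in> I}"

lemma finite_infected_nbrs: "finite (infected_nbrs I v)"
  by (rule finite_subset[OF _ finite_tverts]) (auto simp: infected_nbrs_def tadj_def tverts_def)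

lemma infected_nbrs_mono: "I \<subseteq> I' \<Longrightarrow> card (infected_nbrs I v) \<le> card (infected_nbrs I' v)"
  by (rule card_mono[OF finite_infected_nbrs]) (auto simp: infected_nbrs_def)

lemma in_infected_nbrsI:
  "i < L \<Longrightarrow> v \<in> Hs ! i \<Longrightarrow> w \<in> Hs ! i \<Longrightarrow> w \<in> I \<Longrightarrow> w \<noteq> v \<Longrightarrow> w \<in> infected_nbrs I v"
  unfolding infected_nbrs_def tadj_def using nth_mem by blast

lemma clique_Int_subset_infected_nbrs:
  "i < L \<Longrightarrow> v \<in> Hs ! i \<Longrightarrow> v \<notin> I \<Longrightarrow> Hs ! i \<inter> I \<subseteq> infected_nbrs I v"
  using in_infected_nbrsI by blast

definition later_cliques :: "nat \<Rightarrow> nat set" where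
  "later_cliques v = {i. i < L \<and> v \<in> Hs ! i \<and> i \<noteq> birth v}"

lemma finite_later_cliques: "finite (later_cliques v)"
  unfolding later_cliques_def by auto

text \<open>An infected neighbour w of v is fresh in the first clique containing both, unless that
  is the birth clique of v: otherwise v and w would both lie on its shared edge, which belongs
  to an earlier clique.\<close>

lemma infected_nbrs_subset:
  assumes v: "v \<in> tverts Hs" "v \<notin> I"
  shows "infected_nbrs I v \<subseteq> (Hs ! birth v \<inter> I) \<union> (\<Union>i\<in>later_cliques v. fresh i \<inter> I)"
proof
  fix w
  assume w: "w \<in> infected_nbrs I v"
  define P where "P i \<longleftrightarrow> i < L \<and> v \<in> Hs ! i \<and> w \<in> Hs ! i" for i
  have "\<exists>i. P i" "w \<in> I"
    using w unfolding infected_nbrs_def tadj_def P_def by (auto simp: in_set_conv_nth)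
  define i0 where "i0 = (LEAST i. P i)"
  have P0: "P i0"
    unfolding i0_def using \<open>\<exists>i. P i\<close> by (metis LeastI)
  show "w \<in> (Hs ! birth v \<inter> I) \<union> (\<Union>i\<in>later_cliques v. fresh i \<inter> I)"
  proof (cases "i0 = birth v")
    case True
    then show ?thesis using P0 \<open>w \<in> I\<close> P_def by auto
  next
    case False
    then have later: "i0 \<in> later_cliques v"
      using P0 unfolding P_def later_cliques_def by auto
    have "v \<in> shared i0" "0 < i0"
      using shared_if_not_birth[of i0 v] P0 False unfolding P_def by auto
    then obtain a b j where ab: "shared i0 = {a, b}" "j < i0" "{a, b} \<subseteq> Hs ! j"
      using P0 unfolding P_def by (metis shared_pos)
    have "w \<in> fresh i0"
    proof (rule ccontr)
      assume "w \<notin> fresh i0"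
      then have "w \<in> shared i0"
        using P0 fresh_Un_shared[of i0] unfolding P_def by blast
      then have "P j"
        using ab P0 \<open>v \<in> shared i0\<close> unfolding P_def by auto
      then show False
        using \<open>j < i0\<close> not_less_Least unfolding i0_def by blast
    qed
    then show ?thesis using later \<open>w \<in> I\<close> by blast
  qed
qed

definition edge_gain :: "nat set \<Rightarrow> nat \<Rightarrow> nat" where
  "edge_gain I v = card (Hs ! birth v \<inter> I) + (\<Sum>i\<in>later_cliques v. card (fresh i \<inter> I))"

lemma card_infected_nbrs_le_edge_gain:
  assumes "v \<in> tverts Hs" "v \<notin> I" "finite I"
  shows "card (infected_nbrs I v) \<le> edge_gain I v"
proof -
  have "card (infected_nbrs I v)
      \<le> card ((Hs ! birth v \<inter> I) \<union> (\<Union>i\<in>later_cliques v. fresh i \<inter> I))"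
    by (rule card_mono) (use infected_nbrs_subset[OF assms(1,2)] assms(3) finite_later_cliques in auto)
  also have "\<dots> \<le> card (Hs ! birth v \<inter> I) + card (\<Union>i\<in>later_cliques v. fresh i \<inter> I)"
    by (rule card_Un_le)
  also have "card (\<Union>i\<in>later_cliques v. fresh i \<inter> I) \<le> (\<Sum>i\<in>later_cliques v. card (fresh i \<inter> I))"
    by (rule card_UN_le[OF finite_later_cliques])
  finally show ?thesis
    unfolding edge_gain_def by simp
qed

text \<open>The number of ordered pairs of distinct infected vertices of the i-th clique, at least one
  of them fresh there. Summed over all cliques this counts every edge of T[I] twice, so
  adding an uninfected vertex v increases the sum by twice the edge gain of v.\<close>

definition fresh_pairs :: "nat \<Rightarrow> nat set \<Rightarrow> int" where
  "fresh_pairs i I = int (card (fresh i \<inter> I)) * (int (card (fresh i \<inter> I)) - 1)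
      + 2 * int (card (fresh i \<inter> I)) * int (card (shared i \<inter> I))"

lemma fresh_pairs_nonneg: "fresh_pairs i I \<ge> 0"
  unfolding fresh_pairs_def by (cases "card (fresh i \<inter> I)") auto

lemma fresh_pairs_insert:
  assumes v: "v \<in> tverts Hs" "v \<notin> I" and i: "i < L"
  shows "fresh_pairs i (insert v I) = fresh_pairs i I +
    (if i = birth v then 2 * int (card (Hs ! i \<inter> I))
     else if v \<in> Hs ! i then 2 * int (card (fresh i \<inter> I)) else 0)"
proof -
  have fin: "finite (fresh i \<inter> I)" "finite (shared i \<inter> I)"
    using finite_fresh[OF i] finite_shared[OF i] by auto
  consider "i = birth v" | "i \<noteq> birth v" "v \<in> Hs ! i" | "v \<notin> Hs ! i"
    by blast
  then show ?thesis
  proof cases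
    case 1
    then have "v \<in> fresh i" "v \<notin> shared i"
      using fresh_birth[OF v(1)] fresh_shared_disjoint[of i] by auto
    then have "fresh i \<inter> insert v I = insert v (fresh i \<inter> I)" "shared i \<inter> insert v I = shared i \<inter> I"
      by auto
    then show ?thesis
      unfolding fresh_pairs_def using 1 fin v(2) card_clique_Int_split[OF i, of I]
      by (simp add: algebra_simps)
  next
    case 2
    then have "v \<in> shared i" "v \<notin> fresh i"
      using shared_if_not_birth[OF i] fresh_shared_disjoint[of i] by auto
    then have "shared i \<inter> insert v I = insert v (shared i \<inter> I)" "fresh i \<inter> insert v I = fresh i \<inter> I"
      by auto
    then show ?thesis
      unfolding fresh_pairs_def using 2 fin v(2) by (simp add: algebra_simps)
  next
    case 3
    then have "fresh i \<inter> insert v I = fresh i \<inter> I" "shared i \<inter> insert v I = shared i \<inter> I"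
      using fresh_subset[of i] shared_subset[of i] by auto
    then show ?thesis
      unfolding fresh_pairs_def using 3 birth(2)[OF v(1)] by auto
  qed
qed

lemma sum_fresh_pairs_insert:
  assumes v: "v \<in> tverts Hs" "v \<notin> I"
  shows "(\<Sum>i<L. fresh_pairs i (insert v I)) = (\<Sum>i<L. fresh_pairs i I) + 2 * int (edge_gain I v)"
proof -
  define e where "e i = (if i = birth v then 2 * int (card (Hs ! i \<inter> I))
     else if v \<in> Hs ! i then 2 * int (card (fresh i \<inter> I)) else 0)" for i
  have "(\<Sum>i<L. e i) = e (birth v) + (\<Sum>i\<in>{..<L} - {birth v}. e i)"
    using sum.remove[of "{..<L}" "birth v" e] birth(1)[OF v(1)] by simp
  also have "(\<Sum>i\<in>{..<L} - {birth v}. e i) = (\<Sum>i\<in>later_cliques v. 2 * int (card (fresh i \<inter> I)))"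
    by (rule sum.mono_neutral_cong_right) (auto simp: e_def later_cliques_def)
  finally have "(\<Sum>i<L. e i) = 2 * int (edge_gain I v)"
    unfolding edge_gain_def e_def by (simp add: sum_distrib_left)
  moreover have "(\<Sum>i<L. fresh_pairs i (insert v I)) = (\<Sum>i<L. fresh_pairs i I) + (\<Sum>i<L. e i)"
    using fresh_pairs_insert[OF v] unfolding e_def by (simp add: sum.distrib)
  ultimately show ?thesis by simp
qed

definition full_cliques :: "nat set \<Rightarrow> nat" where
  "full_cliques I = card {i. i < L \<and> Hs ! i \<subseteq> I}"

definition completed_by :: "nat set \<Rightarrow> nat \<Rightarrow> nat set" where
  "completed_by I v = {i. i < L \<and> v \<in> Hs ! i \<and> Hs ! i - {v} \<subseteq> I}"

lemma full_cliques_insert: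
  assumes "v \<notin> I"
  shows "full_cliques (insert v I) = full_cliques I + card (completed_by I v)"
proof -
  have "{i. i < L \<and> Hs ! i \<subseteq> insert v I} = {i. i < L \<and> Hs ! i \<subseteq> I} \<union> completed_by I v"
    unfolding completed_by_def by auto
  moreover have "{i. i < L \<and> Hs ! i \<subseteq> I} \<inter> completed_by I v = {}"
    unfolding completed_by_def using assms by auto
  ultimately show ?thesis
    unfolding full_cliques_def by (simp add: card_Un_disjoint completed_by_def)
qed

definition potential :: "nat set \<Rightarrow> int" where
  "potential I = 2 * int (r - 2) * int (card I) - (\<Sum>i<L. fresh_pairs i I) + 2 * int (full_cliques I)"

lemma potential_insert:
  assumes "I \<subseteq> tverts Hs" "v \<in> tverts Hs" "v \<notin> I"
  shows "potential (insert v I)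
    = potential I + 2 * int (r - 2) - 2 * int (edge_gain I v) + 2 * int (card (completed_by I v))"
proof -
  have "card (insert v I) = card I + 1"
    using assms finite_subset[OF _ finite_tverts] by simp
  then show ?thesis
    unfolding potential_def sum_fresh_pairs_insert[OF assms(2,3)] full_cliques_insert[OF assms(3)]
    by (simp add: algebra_simps)
qed

lemma card_infected_nbrs_if_completed:
  assumes "k \<in> completed_by I v" "v \<notin> I"
  shows "card (infected_nbrs I v) \<ge> r - 1"
proof -
  have k: "k < L" "v \<in> Hs ! k" "Hs ! k - {v} \<subseteq> I"
    using assms unfolding completed_by_def by auto
  have "Hs ! k - {v} \<subseteq> infected_nbrs I v"
    using in_infected_nbrsI[OF k(1,2)] k(3) by blast
  then have "card (Hs ! k - {v}) \<le> card (infected_nbrs I v)"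
    using card_mono finite_infected_nbrs by blast
  then show ?thesis
    using card_clique[OF k(1)] finite_clique[OF k(1)] k(2) by simp
qed

lemma edge_gain_ge_completed_by:
  assumes v: "v \<in> tverts Hs"
  shows "(r - 2) * card (completed_by I v) \<le> edge_gain I v"
proof -
  define b where "b = birth v"
  define f where "f i = (if i = b then card (Hs ! i \<inter> I) else card (fresh i \<inter> I))" for i
  have b: "b \<notin> later_cliques v"
    unfolding b_def later_cliques_def by simp
  have "(\<Sum>i\<in>later_cliques v. f i) = (\<Sum>i\<in>later_cliques v. card (fresh i \<inter> I))"
    using b unfolding f_def by (intro sum.cong) auto
  then have gain: "edge_gain I v = (\<Sum>i\<in>insert b (later_cliques v). f i)"
    using b finite_later_cliques unfolding edge_gain_def b_def[symmetric] by (simp add: f_def)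
  have completed: "completed_by I v \<subseteq> insert b (later_cliques v)"
    unfolding completed_by_def later_cliques_def b_def by auto
  have "r - 2 \<le> f i" if "i \<in> completed_by I v" for i
  proof -
    have i: "i < L" "v \<in> Hs ! i" "Hs ! i - {v} \<subseteq> I"
      using that unfolding completed_by_def by auto
    show ?thesis
    proof (cases "i = b")
      case True
      have "card (Hs ! i - {v}) \<le> card (Hs ! i \<inter> I)"
        using i finite_clique[OF i(1)] by (intro card_mono) auto
      then show ?thesis
        using True card_clique[OF i(1)] finite_clique[OF i(1)] i(2) unfolding f_def by simp
    next
      case False
      then have "v \<notin> fresh i" "0 < i"
        using fresh_iff_birth[OF v i(1)] shared_if_not_birth[OF i(1,2)] unfolding b_def by auto
      then have "fresh i \<inter> I = fresh i"
        using i(3) fresh_subset[of i] by blast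
      then show ?thesis
        using False card_fresh[OF i(1)] \<open>0 < i\<close> unfolding f_def by simp
    qed
  qed
  then have "(r - 2) * card (completed_by I v) \<le> (\<Sum>i\<in>completed_by I v. f i)"
    using sum_mono[of "completed_by I v" "\<lambda>_. r - 2" f] by (simp add: mult.commute)
  also have "\<dots> \<le> (\<Sum>i\<in>insert b (later_cliques v). f i)"
    using completed finite_later_cliques by (intro sum_mono2) auto
  finally show ?thesis
    using gain by simp
qed

end

locale Kr_tree_bp = Kr_tree_graph +
  assumes r_ge_5: "r \<ge> 5"
begin

abbreviation stable :: "nat set \<Rightarrow> bool" where
  "stable I \<equiv> \<not> (\<exists>J. usual_step r Hs I J)"

lemma card_infected_nbrs_stable:
  "stable I \<Longrightarrow> v \<in> tverts Hs \<Longrightarrow> v \<notin> I \<Longrightarrow> card (infected_nbrs I v) < r - 2"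
  unfolding usual_step_def infected_nbrs_def by (metis not_le)

lemma edge_gain_usual_step:
  assumes v: "v \<in> tverts Hs" "v \<notin> I" "finite I" and nbrs: "card (infected_nbrs I v) \<ge> r - 2"
  shows "r - 2 + card (completed_by I v) \<le> edge_gain I v"
proof -
  have gain: "card (infected_nbrs I v) \<le> edge_gain I v"
    by (rule card_infected_nbrs_le_edge_gain[OF v])
  consider "card (completed_by I v) = 0" | "card (completed_by I v) = 1" | "card (completed_by I v) \<ge> 2"
    by linarith
  then show ?thesis
  proof cases
    case 1
    then show ?thesis using gain nbrs by simp
  next
    case 2
    then obtain k where "k \<in> completed_by I v"
      by (metis card_1_singletonE singletonI)
    then have "card (infected_nbrs I v) \<ge> r - 1"
      using card_infected_nbrs_if_completed v(2) by blast
    then show ?thesis using gain 2 r_ge_5 by simp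
  next
    case 3
    have "2 * (r - 2) \<le> (r - 2) * card (completed_by I v)" "3 * card (completed_by I v) \<le> (r - 2) * card (completed_by I v)"
      using 3 r_ge_5 by simp_all
    then have "r - 2 + card (completed_by I v) \<le> (r - 2) * card (completed_by I v)"
      by linarith
    then show ?thesis
      using edge_gain_ge_completed_by[OF v(1), of I] by linarith
  qed
qed

lemma potential_usual_step:
  assumes "usual_step r Hs I I'" "I \<subseteq> tverts Hs"
  shows "potential I' \<le> potential I"
proof -
  obtain v where v: "v \<in> tverts Hs" "v \<notin> I" "card (infected_nbrs I v) \<ge> r - 2" "I' = insert v I"
    using assms(1) unfolding usual_step_def infected_nbrs_def by blast
  have "r - 2 + card (completed_by I v) \<le> edge_gain I v"
    using edge_gain_usual_step[OF v(1,2) _ v(3)] finite_subset[OF assms(2) finite_tverts] by blast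
  then show ?thesis
    unfolding v(4) potential_insert[OF assms(2) v(1,2)] by linarith
qed

definition primed :: "nat set \<Rightarrow> nat \<Rightarrow> nat \<Rightarrow> bool" where
  "primed I k c \<longleftrightarrow>
     (\<exists>w\<in>Hs ! k. (w \<in> I \<or> card (infected_nbrs I w) \<ge> r - 2) \<and> card (Hs ! k \<inter> I - {w}) \<ge> c)"

lemma primed_mono:
  assumes "k < L" "I \<subseteq> I'" "primed I k c"
  shows "primed I' k c"
proof -
  obtain w where w: "w \<in> Hs ! k" "w \<in> I \<or> card (infected_nbrs I w) \<ge> r - 2"
      "card (Hs ! k \<inter> I - {w}) \<ge> c"
    using assms(3) unfolding primed_def by blast
  have "card (Hs ! k \<inter> I - {w}) \<le> card (Hs ! k \<inter> I' - {w})"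
    by (rule card_mono) (use finite_clique[OF assms(1)] assms(2) in auto)
  moreover have "card (infected_nbrs I w) \<le> card (infected_nbrs I' w)"
    by (rule infected_nbrs_mono[OF assms(2)])
  ultimately have "(w \<in> I' \<or> card (infected_nbrs I' w) \<ge> r - 2) \<and> card (Hs ! k \<inter> I' - {w}) \<ge> c"
    using w assms(2) by auto
  then show ?thesis
    unfolding primed_def using w(1) by blast
qed

lemma card_primed:
  assumes "k < L" "primed I k c"
  shows "c \<le> card (Hs ! k \<inter> I)"
proof -
  obtain w where "card (Hs ! k \<inter> I - {w}) \<ge> c"
    using assms(2) unfolding primed_def by blast
  moreover have "card (Hs ! k \<inter> I - {w}) \<le> card (Hs ! k \<inter> I)"
    by (rule card_mono) (use finite_clique[OF assms(1)] in auto)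
  ultimately show ?thesis by linarith
qed

lemma card_primed_stable:
  assumes "stable I" "k < L" "primed I k c"
  shows "c < card (Hs ! k \<inter> I)"
proof -
  obtain w where w: "w \<in> Hs ! k" "w \<in> I \<or> card (infected_nbrs I w) \<ge> r - 2"
      "card (Hs ! k \<inter> I - {w}) \<ge> c"
    using assms(3) unfolding primed_def by blast
  have "w \<in> I"
    using w(1,2) card_infected_nbrs_stable[OF assms(1)] assms(2) tverts_iff by force
  then have "card (Hs ! k \<inter> I - {w}) = card (Hs ! k \<inter> I) - 1"
    using w(1) by simp
  moreover have "card (Hs ! k \<inter> I) > 0"
    using \<open>w \<in> I\<close> w(1) finite_clique[OF assms(2)] card_gt_0_iff by blast
  ultimately show ?thesis
    using w(3) by linarith
qed

lemma special_stepE: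
  assumes "special_step r Hs I I'"
  obtains i j u w where "stable I" "i < L" "j < L" "Hs ! i \<inter> Hs ! j = {u, w}" "u \<noteq> w"
    "u \<notin> I" "w \<notin> I" "card (Hs ! i \<inter> I) = r - 4" "card (Hs ! j \<inter> I) = 1" "I' = insert u I"
proof -
  obtain f i j u where f: "internal_edge Hs f" "i < L" "j < L" "i \<noteq> j" "f \<subseteq> Hs ! i" "f \<subseteq> Hs ! j"
      "card (Hs ! i \<inter> I) = r - 4" "card (Hs ! j \<inter> I) = 1" "Hs ! i \<inter> I \<inter> f = {}"
      "u \<in> f" "I' = insert u I" and "stable I"
    using assms unfolding special_step_def by blast
  obtain w where w: "f = {u, w}" "u \<noteq> w"
    using f(1,10) unfolding internal_edge_def by auto
  have "Hs ! i \<inter> Hs ! j = f"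
    using f(5,6) card_clique_Int[OF f(2,3,4)] w finite_clique[OF f(2)]
    by (metis card_2_iff card_seteq finite_Int le_inf_iff)
  moreover have "u \<notin> I" "w \<notin> I"
    using f(5,9) w by auto
  ultimately show ?thesis
    using that \<open>stable I\<close> f w by blast
qed

lemma card_special_step_infected:
  assumes "i < L" "j < L" "Hs ! i \<inter> Hs ! j = {u, w}" "u \<notin> I" "w \<notin> I"
    "card (Hs ! i \<inter> I) = r - 4" "card (Hs ! j \<inter> I) = 1"
  shows "card ((Hs ! i \<inter> I) \<union> (Hs ! j \<inter> I)) = r - 3"
proof -
  have "Hs ! i \<inter> I \<inter> (Hs ! j \<inter> I) = {}"
    using assms(3-5) by auto
  then show ?thesis
    using assms(6,7) card_Un_disjoint[of "Hs ! i \<inter> I" "Hs ! j \<inter> I"]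
      finite_clique[OF assms(1)] finite_clique[OF assms(2)] r_ge_5 by auto
qed

lemma potential_special_step:
  assumes "stable I" "I \<subseteq> tverts Hs" "i < L" "j < L" "Hs ! i \<inter> Hs ! j = {u, w}"
    "u \<notin> I" "w \<notin> I" "card (Hs ! i \<inter> I) = r - 4" "card (Hs ! j \<inter> I) = 1"
  shows "potential (insert u I) \<le> potential I + 2"
proof -
  have u: "u \<in> Hs ! i" "u \<in> Hs ! j" "u \<in> tverts Hs"
    using assms(3,5) tverts_iff by auto
  have fin: "finite I"
    using assms(2) finite_tverts finite_subset by blast
  have "card ((Hs ! i \<inter> I) \<union> (Hs ! j \<inter> I)) = r - 3"
    using card_special_step_infected assms(3-9) by blast
  moreover have "(Hs ! i \<inter> I) \<union> (Hs ! j \<inter> I) \<subseteq> infected_nbrs I u"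
    using clique_Int_subset_infected_nbrs assms(3,4,6) u by blast
  ultimately have "r - 3 \<le> card (infected_nbrs I u)"
    by (metis card_mono finite_infected_nbrs)
  then have gain: "r - 3 \<le> edge_gain I u"
    using card_infected_nbrs_le_edge_gain[OF u(3) assms(6) fin] by linarith
  have "completed_by I u = {}"
    using card_infected_nbrs_if_completed card_infected_nbrs_stable[OF assms(1) u(3) assms(6)] assms(6)
    by fastforce
  then show ?thesis
    using gain r_ge_5 unfolding potential_insert[OF assms(2) u(3) assms(6)] by simp
qed

lemma primed_special_step:
  assumes "i < L" "j < L" "Hs ! i \<inter> Hs ! j = {u, w}" "u \<noteq> w" "u \<notin> I" "w \<notin> I"
    "card (Hs ! i \<inter> I) = r - 4" "card (Hs ! j \<inter> I) = 1"
  shows "primed (insert u I) i (r - 3)" "primed (insert u I) j 2"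
proof -
  define I' where "I' = insert u I"
  have w: "w \<in> Hs ! i" "w \<in> Hs ! j" "w \<notin> I'"
    using assms(3,4,6) unfolding I'_def by auto
  have fin: "finite (Hs ! i \<inter> I)" "finite (Hs ! j \<inter> I)"
    using finite_clique assms(1,2) by auto
  have u: "u \<notin> Hs ! i \<inter> I" "u \<notin> Hs ! j \<inter> I"
    using assms(5) by auto
  have "Hs ! i \<inter> I' - {w} = insert u (Hs ! i \<inter> I)" "Hs ! j \<inter> I' - {w} = insert u (Hs ! j \<inter> I)"
    using assms(3,4,6) unfolding I'_def by auto
  then have cards: "card (Hs ! i \<inter> I' - {w}) = r - 3" "card (Hs ! j \<inter> I' - {w}) = 2"
    using fin u assms(7,8) r_ge_5 by simp_all
  have "insert u ((Hs ! i \<inter> I) \<union> (Hs ! j \<inter> I)) \<subseteq> infected_nbrs I' w"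
  proof
    fix a
    assume "a \<in> insert u ((Hs ! i \<inter> I) \<union> (Hs ! j \<inter> I))"
    then have "a \<in> Hs ! i \<or> a \<in> Hs ! j" "a \<in> I'" "a \<noteq> w"
      using assms(3) w(3) unfolding I'_def by auto
    then show "a \<in> infected_nbrs I' w"
      using in_infected_nbrsI assms(1,2) w(1,2) by blast
  qed
  moreover have "card (insert u ((Hs ! i \<inter> I) \<union> (Hs ! j \<inter> I))) = r - 2"
    using card_special_step_infected[OF assms(1-3,5-8)] u fin r_ge_5 by simp
  ultimately have "r - 2 \<le> card (infected_nbrs I' w)"
    by (metis card_mono finite_infected_nbrs)
  then show "primed I' i (r - 3)" "primed I' j 2"
    unfolding primed_def using w cards by auto
qed

text \<open>RA and RB hold the cliques charged in the roles of H_i and H_j of a special step. For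
  r = 5 a fully infected non-root clique contributes only 2 to the potential and can therefore
  absorb just one charge.\<close>

definition charged :: "nat set \<Rightarrow> nat set \<Rightarrow> nat set \<Rightarrow> bool" where
  "charged I RA RB \<longleftrightarrow> RA \<subseteq> {..<L} \<and> RB \<subseteq> {..<L} \<and>
     (\<forall>k\<in>RA. primed I k (r - 3)) \<and> (\<forall>k\<in>RB. primed I k 2) \<and> (r = 5 \<longrightarrow> RA \<inter> RB = {})"

lemma charged_mono: "charged I RA RB \<Longrightarrow> I \<subseteq> I' \<Longrightarrow> charged I' RA RB"
  unfolding charged_def using primed_mono by blast

lemma charged_special_step:
  assumes "charged I RA RB" "i < L" "j < L" "Hs ! i \<inter> Hs ! j = {u, w}" "u \<noteq> w"
    "u \<notin> I" "w \<notin> I" "card (Hs ! i \<inter> I) = r - 4" "card (Hs ! j \<inter> I) = 1"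
  shows "charged (insert u I) (insert i RA) (insert j RB)" "i \<notin> RA" "j \<notin> RB"
proof -
  have cardA: "r - 3 \<le> card (Hs ! k \<inter> I)" if "k \<in> RA" for k
    using assms(1) card_primed that unfolding charged_def by blast
  have cardB: "2 \<le> card (Hs ! k \<inter> I)" if "k \<in> RB" for k
    using assms(1) card_primed that unfolding charged_def by blast
  show "i \<notin> RA"
  proof
    assume "i \<in> RA"
    then have "r - 3 \<le> r - 4"
      using cardA assms(8) by metis
    then show False
      using r_ge_5 by linarith
  qed
  show "j \<notin> RB"
    using cardB assms(9) by fastforce
  moreover have "i \<notin> RB" "j \<notin> RA" if "r = 5"
    using cardA cardB assms(8,9) that by fastforce+
  moreover have "i \<noteq> j"
  proof
    assume "i = j"
    then have "card {u, w} = r"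
      using assms(4) card_clique[OF assms(2)] by simp
    then show False
      using assms(5) r_ge_5 by simp
  qed
  moreover have "charged (insert u I) RA RB"
    using charged_mono[OF assms(1)] by blast
  ultimately show "charged (insert u I) (insert i RA) (insert j RB)"
    using primed_special_step[OF assms(2-9)] assms(1-3) unfolding charged_def by auto
qed

definition bp_invariant :: "nat set \<Rightarrow> nat set \<Rightarrow> bool" where
  "bp_invariant S I \<longleftrightarrow> I \<subseteq> tverts Hs \<and>
     (\<exists>RA RB. charged I RA RB \<and> potential I \<le> potential S + int (card RA) + int (card RB))"

lemma bp_invariantI:
  "I \<subseteq> tverts Hs \<Longrightarrow> charged I RA RB \<Longrightarrow> potential I \<le> potential S + int (card RA) + int (card RB)
    \<Longrightarrow> bp_invariant S I"
  unfolding bp_invariant_def by blast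

lemma bp_invariant_step:
  assumes "bp_invariant S I" "bp_step r Hs I I'"
  shows "bp_invariant S I'"
proof -
  obtain RA RB where I: "I \<subseteq> tverts Hs" "charged I RA RB"
      "potential I \<le> potential S + int (card RA) + int (card RB)"
    using assms(1) unfolding bp_invariant_def by blast
  show ?thesis
    using assms(2) unfolding bp_step_def
  proof
    assume step: "usual_step r Hs I I'"
    then have "I \<subseteq> I'" "I' \<subseteq> tverts Hs"
      using I(1) unfolding usual_step_def by auto
    moreover have "potential I' \<le> potential I"
      by (rule potential_usual_step[OF step I(1)])
    ultimately show ?thesis
      using bp_invariantI[OF _ charged_mono[OF I(2)], of I' S] I(3) by linarith
  next
    assume "special_step r Hs I I'"
    then obtain i j u w where s: "stable I" "i < L" "j < L" "Hs ! i \<inter> Hs ! j = {u, w}" "u \<noteq> w"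
        "u \<notin> I" "w \<notin> I" "card (Hs ! i \<inter> I) = r - 4" "card (Hs ! j \<inter> I) = 1" "I' = insert u I"
      by (rule special_stepE)
    have "finite RA" "finite RB"
      using I(2) finite_subset unfolding charged_def by blast+
    then have "card (insert i RA) = card RA + 1" "card (insert j RB) = card RB + 1"
      using charged_special_step(2,3)[OF I(2) s(2-9)] by simp_all
    moreover have "potential I' \<le> potential I + 2"
      unfolding s(10) by (rule potential_special_step[OF s(1) I(1) s(2-4,6-9)])
    moreover have "I' \<subseteq> tverts Hs"
      using I(1) s(2,4,10) tverts_iff by blast
    ultimately show ?thesis
      using bp_invariantI[OF _ charged_special_step(1)[OF I(2) s(2-9)], of S] I(3)
      unfolding s(10) by linarith
  qed
qed

lemma bp_invariant_run:
  assumes "S \<subseteq> tverts Hs" "(bp_step r Hs)\<^sup>*\<^sup>* S I"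
  shows "bp_invariant S I"
  using assms(2)
proof (induction rule: rtranclp_induct)
  case base
  have "charged S {} {}"
    unfolding charged_def by simp
  then show ?case
    using assms(1) unfolding bp_invariant_def by force
next
  case (step I I')
  then show ?case
    using bp_invariant_step by blast
qed

lemma clique_full_if_stable:
  assumes "stable I" "k < L" "r - 2 \<le> card (Hs ! k \<inter> I)"
  shows "Hs ! k \<subseteq> I"
proof (rule ccontr)
  assume "\<not> Hs ! k \<subseteq> I"
  then obtain x where x: "x \<in> Hs ! k" "x \<notin> I"
    by blast
  then have "card (Hs ! k \<inter> I) \<le> card (infected_nbrs I x)"
    using clique_Int_subset_infected_nbrs[OF assms(2)] card_mono finite_infected_nbrs by metis
  then show False
    using card_infected_nbrs_stable[OF assms(1) _ x(2)] x(1) assms(2,3) tverts_iff by fastforce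
qed

definition clique_potential :: "nat \<Rightarrow> nat set \<Rightarrow> int" where
  "clique_potential i I =
     2 * int (r - 2) * int (card (fresh i \<inter> I)) - fresh_pairs i I + 2 * of_bool (Hs ! i \<subseteq> I)"

lemma potential_eq_sum_clique_potential:
  assumes "I \<subseteq> tverts Hs"
  shows "potential I = (\<Sum>i<L. clique_potential i I)"
proof -
  have "int (full_cliques I) = (\<Sum>i<L. of_bool (Hs ! i \<subseteq> I))"
    unfolding full_cliques_def by (simp add: Int_def conj_commute)
  moreover have "int (card I) = (\<Sum>i<L. int (card (fresh i \<inter> I)))"
    using card_eq_sum_fresh[OF assms] by simp
  ultimately show ?thesis
    unfolding potential_def clique_potential_def
    by (simp add: sum.distrib sum_subtractf sum_distrib_left)
qed

lemma clique_potential_full: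
  assumes "i < L" "Hs ! i \<subseteq> I"
  shows "clique_potential i I = (if i = 0 then (int r - 1) * (int r - 2) else (int r - 2) * (int r - 5) + 2)"
proof -
  have "fresh i \<inter> I = fresh i" "shared i \<inter> I = shared i"
    using assms(2) fresh_subset shared_subset by blast+
  then show ?thesis
    using card_fresh[OF assms(1)] card_shared[OF assms(1)] assms(2) r_ge_5
    unfolding clique_potential_def fresh_pairs_def by (simp add: of_nat_diff algebra_simps)
qed

lemma clique_potential_partial:
  assumes "\<not> Hs ! i \<subseteq> I"
  shows "clique_potential i I = int (card (fresh i \<inter> I))
     * (2 * int r - 3 - int (card (fresh i \<inter> I)) - 2 * int (card (shared i \<inter> I)))"
  using assms r_ge_5 unfolding clique_potential_def fresh_pairs_def by (simp add: of_nat_diff algebra_simps)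

lemma clique_potential_ge_if_stable:
  assumes "stable I" "i < L" "m \<le> 2" "r = 5 \<longrightarrow> m \<le> 1" "0 < m \<longrightarrow> 3 \<le> card (Hs ! i \<inter> I)"
  shows "int r * int m + int (card (fresh i \<inter> I)) \<le> int r * clique_potential i I"
proof (cases "Hs ! i \<subseteq> I")
  case full: True
  then have "fresh i \<inter> I = fresh i"
    using fresh_subset by blast
  then have P: "card (fresh i \<inter> I) = card (fresh i)"
    by simp
  have rm: "int r * int m \<le> int r * 2"
    using assms(3) by (intro mult_left_mono) auto
  show ?thesis
  proof (cases "i = 0")
    case True
    have "4 * 3 \<le> (int r - 1) * (int r - 2)"
      using r_ge_5 by (intro mult_mono) auto
    then have "int r * 3 \<le> int r * ((int r - 1) * (int r - 2))"
      by (intro mult_left_mono) auto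
    then show ?thesis
      using clique_potential_full[OF assms(2) full] True P card_fresh[OF assms(2)] rm by simp
  next
    case False
    have "int r * int m + int r - 2 \<le> int r * ((int r - 2) * (int r - 5) + 2)"
    proof (cases "r = 5")
      case True
      then show ?thesis using assms(4) by simp
    next
      case False
      then have "2 * 1 \<le> (int r - 2) * (int r - 5) - 2"
        using r_ge_5 mult_mono[of 4 "int r - 2" 1 "int r - 5"] by simp
      then have "int r * 4 \<le> int r * ((int r - 2) * (int r - 5) + 2) - 2 * int r"
        using mult_left_mono[of 4 "(int r - 2) * (int r - 5)" "int r"] by (simp add: algebra_simps)
      then show ?thesis using rm by linarith
    qed
    then show ?thesis
      using clique_potential_full[OF assms(2) full] False P card_fresh[OF assms(2)] r_ge_5
      by (simp add: of_nat_diff)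
  qed
next
  case partial: False
  define P where "P = int (card (fresh i \<inter> I))"
  define Q where "Q = int (card (shared i \<inter> I))"
  have "Q \<le> 2"
    using card_mono[OF finite_shared[OF assms(2)], of "shared i \<inter> I"] card_shared[OF assms(2)]
    unfolding Q_def by (auto split: if_splits)
  moreover have "P + Q < int r - 2"
    using clique_full_if_stable[OF assms(1,2)] partial card_clique_Int_split[OF assms(2), of I] r_ge_5
    unfolding P_def Q_def by force
  ultimately have "3 * P \<le> P * (2 * int r - 3 - P - 2 * Q)"
    using mult_left_mono[of 3 "2 * int r - 3 - P - 2 * Q" P] unfolding P_def by (simp add: mult.commute)
  moreover have "int m + P \<le> 3 * P"
  proof (cases "m = 0")
    case False
    then have "1 \<le> P"
      using assms(5) \<open>Q \<le> 2\<close> card_clique_Int_split[OF assms(2), of I] unfolding P_def Q_def by force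
    then show ?thesis
      using assms(3) by linarith
  qed (simp add: P_def)
  ultimately have "int m + P \<le> clique_potential i I"
    using clique_potential_partial[OF partial] unfolding P_def Q_def by linarith
  then have "int r * (int m + P) \<le> int r * clique_potential i I"
    by (intro mult_left_mono) auto
  moreover have "1 * P \<le> int r * P"
    unfolding P_def using r_ge_5 by (intro mult_right_mono) auto
  ultimately show ?thesis
    unfolding P_def by (simp add: algebra_simps)
qed

lemma potential_ge_if_stable:
  assumes "stable I" "I \<subseteq> tverts Hs" "charged I RA RB"
  shows "int r * (int (card RA) + int (card RB)) + int (card I) \<le> int r * potential I"
proof -
  define m :: "nat \<Rightarrow> nat" where "m i = of_bool (i \<in> RA) + of_bool (i \<in> RB)" for i
  have R: "RA \<subseteq> {..<L}" "RB \<subseteq> {..<L}" "r = 5 \<longrightarrow> RA \<inter> RB = {}"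
    using assms(3) unfolding charged_def by auto
  have card3: "3 \<le> card (Hs ! i \<inter> I)" if i: "i < L" "i \<in> RA \<or> i \<in> RB" for i
  proof -
    consider "primed I i (r - 3)" | "primed I i 2"
      using i(2) assms(3) unfolding charged_def by blast
    then show ?thesis
      using card_primed_stable[OF assms(1) i(1)] r_ge_5 by cases force+
  qed
  have "int r * int (m i) + int (card (fresh i \<inter> I)) \<le> int r * clique_potential i I" if "i < L" for i
  proof (rule clique_potential_ge_if_stable[OF assms(1) that])
    show "m i \<le> 2" "r = 5 \<longrightarrow> m i \<le> 1"
      using R(3) unfolding m_def by auto
    show "0 < m i \<longrightarrow> 3 \<le> card (Hs ! i \<inter> I)"
      using card3[OF that] unfolding m_def by auto
  qed
  then have "(\<Sum>i<L. int r * int (m i) + int (card (fresh i \<inter> I))) \<le> (\<Sum>i<L. int r * clique_potential i I)"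
    by (intro sum_mono) simp
  also have "\<dots> = int r * potential I"
    unfolding potential_eq_sum_clique_potential[OF assms(2)] by (simp add: sum_distrib_left)
  finally have "(\<Sum>i<L. int r * int (m i) + int (card (fresh i \<inter> I))) \<le> int r * potential I" .
  moreover have "(\<Sum>i<L. int (m i)) = int (card RA) + int (card RB)"
    using R(1,2) unfolding m_def by (simp add: sum.distrib Int_absorb1)
  ultimately show ?thesis
    using card_eq_sum_fresh[OF assms(2)] by (simp add: sum.distrib sum_distrib_left[symmetric])
qed

lemma potential_le_card:
  assumes "S \<subseteq> tverts Hs"
  shows "potential S \<le> 2 * (int r - 1) * int (card S)"
proof -
  have "of_bool (Hs ! i \<subseteq> S) \<le> card (fresh i \<inter> S)" if "i < L" for i
  proof (cases "Hs ! i \<subseteq> S")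
    case True
    then have "fresh i \<inter> S = fresh i"
      using fresh_subset by blast
    then show ?thesis
      using True card_fresh[OF that] r_ge_5 by (cases "i = 0") auto
  qed simp
  then have "full_cliques S \<le> card S"
    using sum_mono[of "{..<L}" "\<lambda>i. of_bool (Hs ! i \<subseteq> S)" "\<lambda>i. card (fresh i \<inter> S)"]
    unfolding full_cliques_def card_eq_sum_fresh[OF assms] by (simp add: Int_def conj_commute)
  moreover have "0 \<le> (\<Sum>i<L. fresh_pairs i S)"
    by (simp add: sum_nonneg fresh_pairs_nonneg)
  ultimately show ?thesis
    unfolding potential_def using r_ge_5 by (simp add: of_nat_diff algebra_simps)
qed

lemma card_bp_run_result_le:
  assumes "S \<subseteq> tverts Hs" "bp_run_result r Hs S I"
  shows "int (card I) \<le> 2 * int r * (int r - 1) * int (card S)"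
proof -
  have "stable I"
    using assms(2) unfolding bp_run_result_def bp_step_def by blast
  obtain RA RB where I: "I \<subseteq> tverts Hs" "charged I RA RB"
      "potential I \<le> potential S + int (card RA) + int (card RB)"
    using bp_invariant_run[OF assms(1)] assms(2) unfolding bp_run_result_def bp_invariant_def by blast
  have "int r * potential I \<le> int r * (potential S + int (card RA) + int (card RB))"
    using I(3) by (intro mult_left_mono) auto
  then have "int (card I) \<le> int r * potential S"
    using potential_ge_if_stable[OF \<open>stable I\<close> I(1,2)] by (simp add: algebra_simps)
  also have "\<dots> \<le> int r * (2 * (int r - 1) * int (card S))"
    using potential_le_card[OF assms(1)] by (intro mult_left_mono) auto
  finally show ?thesis
    by (simp add: algebra_simps)
qed

end

theorem lemma6p5:
  fixes r :: nat
  assumes "r \<ge> 5"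
  shows "\<exists>C::real. \<forall>Hs S I. Kr_tree r Hs \<longrightarrow> S \<subseteq> tverts Hs \<longrightarrow>
           bp_run_result r Hs S I \<longrightarrow> real (card I) \<le> C * real (card S)"
proof (intro exI allI impI)
  fix Hs S I
  assume "Kr_tree r Hs" "S \<subseteq> tverts Hs" "bp_run_result r Hs S I"
  then interpret Kr_tree_bp r Hs
    using assms by unfold_locales
  have "int (card I) \<le> 2 * int r * (int r - 1) * int (card S)"
    by (rule card_bp_run_result_le) fact+
  then have "real_of_int (int (card I)) \<le> real_of_int (2 * int r * (int r - 1) * int (card S))"
    by (simp only: of_int_le_iff)
  then show "real (card I) \<le> 2 * real r * (real r - 1) * real (card S)"
    by simp
qed

end
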